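(* Let $K$ be a ramified quadratic extension of $\mathbb{Q}_2$, $d=2m$ with $m$ odd, $m\ge3$, and $f=a_1x_1^d+\dots+a_sx_s^d$ with all $a_i\in\mathcal{O}\setminus\{0\}$. Suppose that for some level $k$, $f$ has two variables at level $k$ with the same $\pi$-coefficient, and either $f$ has a variable at level $k+2$ and a variable at level $k+3$, or $f$ has a variable at level $k+3$ and a variable at level $k+4$. Then $f$ has a nontrivial zero in $K$.
   Context: $\mathcal{O}$ is the ring of integers of $K$ and $\pi$ the uniformizer: $\pi=\sqrt{2},\sqrt{-2},\sqrt{10},\sqrt{-10},1+\sqrt{-1},1+\sqrt{-5}$ for $K=\mathbb{Q}_2(\sqrt2),\mathbb{Q}_2(\sqrt{-2}),\mathbb{Q}_2(\sqrt{10}),\mathbb{Q}_2(\sqrt{-10}),\mathbb{Q}_2(\sqrt{-1}),\mathbb{Q}_2(\sqrt{-5})$ respectively. Each unit $u$ has a unique expansion $u=c_0+c_1\pi+c_2\pi^2+\cdots$ with $c_j\in\{0,1\}$, $c_0=1$. Writing $a_i=\pi^r u$ with $u$ a unit, the variable $x_i$ is at level $r\bmod d$ (levels are residues modulo $d$), and its $\pi$-coefficient is $c_1$ of $u$. A nontrivial zero is a point of $K^s$, not all coordinates zero, where $f$ vanishes. *)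

theory Defs
  imports Main
begin

type_synonym z2 = "nat \<Rightarrow> int"

text \<open>x n is the residue of the 2-adic integer modulo 2^n, in canonical range.\<close>
definition Z2 :: "z2 set" where
  "Z2 = {x. \<forall>n. 0 \<le> x n \<and> x n < 2 ^ n \<and> x (Suc n) mod 2 ^ n = x n}"

definition z2_of_int :: "int \<Rightarrow> z2" where
  "z2_of_int k = (\<lambda>n. k mod 2 ^ n)"

definition z2_add :: "z2 \<Rightarrow> z2 \<Rightarrow> z2" where
  "z2_add x y = (\<lambda>n. (x n + y n) mod 2 ^ n)"

definition z2_mul :: "z2 \<Rightarrow> z2 \<Rightarrow> z2" where
  "z2_mul x y = (\<lambda>n. (x n * y n) mod 2 ^ n)"

text \<open>Elements of O are pairs (a,b) standing for a + b*pi, with a, b 2-adic integers.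
  The uniformizer pi satisfies pi^2 = t*pi - n, where (t,n) = Kpar D.
  K = Q_2(sqrt D) with D in {2,-2,10,-10,-1,-5}; pi = sqrt D for D in {2,-2,10,-10},
  pi = 1 + sqrt D for D in {-1,-5} (so pi^2 = 2 pi + D - 1).\<close>

type_synonym ok = "z2 \<times> z2"

definition Kpar :: "int \<Rightarrow> int \<times> int" where
  "Kpar D = (if D \<in> {-1, -5} then (2, 1 - D) else (0, - D))"

definition O_set :: "ok set" where
  "O_set = Z2 \<times> Z2"

definition ok_zero :: ok where "ok_zero = (z2_of_int 0, z2_of_int 0)"
definition ok_one :: ok where "ok_one = (z2_of_int 1, z2_of_int 0)"
definition ok_pi :: ok where "ok_pi = (z2_of_int 0, z2_of_int 1)"

definition ok_add :: "ok \<Rightarrow> ok \<Rightarrow> ok" where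
  "ok_add u v = (z2_add (fst u) (fst v), z2_add (snd u) (snd v))"

definition ok_mul :: "int \<Rightarrow> ok \<Rightarrow> ok \<Rightarrow> ok" where
  "ok_mul D u v =
    (let (t, n) = Kpar D; (a, b) = u; (c, e) = v in
      (z2_add (z2_mul a c) (z2_mul (z2_of_int (- n)) (z2_mul b e)),
       z2_add (z2_add (z2_mul a e) (z2_mul b c)) (z2_mul (z2_of_int t) (z2_mul b e))))"

primrec ok_pow :: "int \<Rightarrow> ok \<Rightarrow> nat \<Rightarrow> ok" where
  "ok_pow D u 0 = ok_one"
| "ok_pow D u (Suc k) = ok_mul D (ok_pow D u k) u"

primrec ok_sum :: "(nat \<Rightarrow> ok) \<Rightarrow> nat \<Rightarrow> ok" where
  "ok_sum g 0 = ok_zero"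
| "ok_sum g (Suc k) = ok_add (ok_sum g k) (g k)"

definition ok_unit :: "int \<Rightarrow> ok \<Rightarrow> bool" where
  "ok_unit D u \<longleftrightarrow> u \<in> O_set \<and> (\<exists>v\<in>O_set. ok_mul D u v = ok_one)"

definition ok_ord :: "int \<Rightarrow> ok \<Rightarrow> nat" where
  "ok_ord D a = (LEAST r. \<exists>u. ok_unit D u \<and> a = ok_mul D (ok_pow D ok_pi r) u)"

definition ok_unitpart :: "int \<Rightarrow> ok \<Rightarrow> ok" where
  "ok_unitpart D a = (SOME u. ok_unit D u \<and> a = ok_mul D (ok_pow D ok_pi (ok_ord D a)) u)"

text \<open>The pi-coefficient c_1 of a unit u = 1 + c_1 pi + c_2 pi^2 + ... (c_j in {0,1}):
  the unique c in {0,1} with u = 1 + c*pi + pi^2 * w for some w in O.\<close>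
definition pi_coeff :: "int \<Rightarrow> ok \<Rightarrow> nat" where
  "pi_coeff D u = (THE c. c \<in> {0, 1} \<and>
     (\<exists>w\<in>O_set. u = ok_add (ok_add ok_one (ok_mul D (z2_of_int (int c), z2_of_int 0) ok_pi))
                             (ok_mul D (ok_pow D ok_pi 2) w)))"

definition level :: "int \<Rightarrow> nat \<Rightarrow> ok \<Rightarrow> nat" where
  "level D d a = ok_ord D a mod d"

definition var_pi_coeff :: "int \<Rightarrow> ok \<Rightarrow> nat" where
  "var_pi_coeff D a = pi_coeff D (ok_unitpart D a)"

end

theory Submission
  imports Defs "HOL-Number_Theory.Cong"
begin

text \<open>
  Write each coefficient as \<open>\<pi> ^ r * u\<close> with a unit \<open>u\<close>. Multiplying the variables by suitable
  powers of \<open>\<pi>\<close> moves the two variables at level \<open>k\<close> and one variable at each of the levels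
  \<open>k + c\<close>, \<open>k + c'\<close> (where \<open>(c, c') = (2, 3)\<close> or \<open>(3, 4)\<close>) to valuations \<open>L, L, L + c, L + c'\<close>, so it
  suffices to solve \<open>u\<^sub>1 t ^ d + u\<^sub>2 + \<pi> ^ c u\<^sub>3 \<xi> ^ d + \<pi> ^ c' u\<^sub>4 \<zeta> ^ d = 0\<close> in \<open>O\<close>.
  Equal \<open>\<pi>\<close>-coefficients give \<open>\<pi> ^ 2 dvd u\<^sub>1 + u\<^sub>2\<close>. Since \<open>2 = \<pi> ^ 2 * unit\<close> and \<open>m\<close> is odd,
  \<open>(1 + \<pi>) ^ d = 1 + \<pi> ^ 2 * unit\<close>; hence choosing \<open>t, \<xi>, \<zeta>\<close> among \<open>0, 1, 1 + \<pi>\<close> raises the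
  valuation of the left-hand side one step at a time until it is at least 5. As the valuation of
  \<open>d\<close> is 2, Hensel's lemma then lifts \<open>t\<close> to an exact zero.
\<close>

lemma unit_mult: "a dvd 1 \<Longrightarrow> b dvd 1 \<Longrightarrow> a * b dvd (1::'a::comm_semiring_1)"
  using mult_dvd_mono[of a 1 b 1] by simp

lemma unit_power: "a dvd 1 \<Longrightarrow> a ^ n dvd (1::'a::comm_semiring_1)"
  using dvd_power_same[of a 1 n] by simp

lemma power_dvd_diff_of_steps:
  fixes s :: "nat \<Rightarrow> 'a::comm_ring_1"
  assumes "\<And>j. c ^ j dvd s (Suc j) - s j" and "n \<le> j"
  shows "c ^ n dvd s j - s n"
  using assms(2)
proof (induction j rule: dec_induct)
  case (step j)
  have "c ^ n dvd s (Suc j) - s j"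
    using le_imp_power_dvd[OF \<open>n \<le> j\<close>] assms(1)[of j] by (rule dvd_trans)
  then have "c ^ n dvd (s (Suc j) - s j) + (s j - s n)"
    using step.IH by (rule dvd_add)
  then show ?case by simp
qed simp

lemma diff_dvd_power_diff: "x - y dvd x ^ n - (y::'a::comm_ring_1) ^ n"
proof (cases n)
  case (Suc k)
  then show ?thesis using diff_power_eq_sum[of x k y] by simp
qed simp

lemma power_add_first_order:
  fixes t h :: "'a::comm_ring_1"
  shows "\<exists>Q. (t + h) ^ Suc n = t ^ Suc n + of_nat (Suc n) * t ^ n * h + h ^ 2 * Q"
proof (induction n)
  case 0
  show ?case by (rule exI[of _ 0]) simp
next
  case (Suc n)
  then obtain Q where "(t + h) ^ Suc n = t ^ Suc n + of_nat (Suc n) * t ^ n * h + h ^ 2 * Q"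
    by blast
  then have "(t + h) ^ Suc (Suc n) = t ^ Suc (Suc n) + of_nat (Suc (Suc n)) * t ^ Suc n * h
      + h ^ 2 * (t * Q + of_nat (Suc n) * t ^ n + h * Q)"
    by (simp add: algebra_simps power2_eq_square)
  then show ?case by blast
qed

lemma exists_exponent_to_level:
  fixes r k c d M :: nat
  assumes "r mod d = (k + c) mod d" "r \<le> M"
  shows "\<exists>e. r + d * e = k + d * M + c"
proof -
  define q p where "q = r div d" and "p = (k + c) div d"
  have "q \<le> M" unfolding q_def using div_le_dividend assms(2) by (rule le_trans)
  then have "d * q \<le> d * M" by simp
  moreover have "r = d * q + r mod d" by (simp add: q_def)
  moreover have "k + c = d * p + r mod d" using assms(1) by (simp add: p_def)
  moreover have "d * (M - q + p) = d * M - d * q + d * p"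
    by (simp add: distrib_left diff_mult_distrib2)
  ultimately have "r + d * (M - q + p) = k + d * M + c" by linarith
  then show ?thesis by blast
qed

lemma mod_add_left_cancel_less:
  fixes k a b d :: nat
  assumes "(k + a) mod d = (k + b) mod d" "a < d" "b < d"
  shows "a = b"
proof -
  have "[k + a = k + b] (mod d)" using assms(1) by (simp add: cong_def)
  then have "[a = b] (mod d)" by (simp add: cong_add_lcancel_nat)
  then show ?thesis using assms(2,3) by (rule cong_less_modulus_unique_nat)
qed

text \<open>With \<open>M\<close> the sum of all \<open>r i\<close>, the exponents \<open>e i\<close> are chosen so that the substitution
  \<open>x i = p ^ e i * \<xi> i\<close> turns every term into \<open>p ^ (k + d * M)\<close> times the corresponding term of \<open>zero\<close>.\<close>

lemma diagonal_zero_of_offset_zero: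
  fixes p :: "'a::comm_ring_1" and A U \<xi> :: "nat \<Rightarrow> 'a" and r c :: "nat \<Rightarrow> nat"
  assumes I: "I \<subseteq> {..<s}" and d: "0 < d"
    and decomp: "\<And>i. i \<in> I \<Longrightarrow> A i = p ^ r i * U i"
    and level: "\<And>i. i \<in> I \<Longrightarrow> r i mod d = (k + c i) mod d"
    and zero: "(\<Sum>i\<in>I. p ^ c i * U i * \<xi> i ^ d) = 0"
  shows "\<exists>e. (\<Sum>i<s. A i * (if i \<in> I then p ^ e i * \<xi> i else 0) ^ d) = 0"
proof -
  have fin: "finite I" using I finite_subset by blast
  define M where "M = (\<Sum>i\<in>I. r i)"
  have "\<forall>i\<in>I. \<exists>e. r i + d * e = k + d * M + c i"
  proof
    fix i assume "i \<in> I"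
    have "r i \<le> M" unfolding M_def using \<open>i \<in> I\<close> _ fin by (rule member_le_sum) simp
    with level[OF \<open>i \<in> I\<close>] show "\<exists>e. r i + d * e = k + d * M + c i"
      by (rule exists_exponent_to_level)
  qed
  then obtain e where e: "\<forall>i\<in>I. r i + d * e i = k + d * M + c i"
    by (rule bchoice[THEN exE])
  have scaled: "A i * (p ^ e i * \<xi> i) ^ d = p ^ (k + d * M) * (p ^ c i * U i * \<xi> i ^ d)" if "i \<in> I" for i
  proof -
    have "(p ^ e i * \<xi> i) ^ d = p ^ (d * e i) * \<xi> i ^ d"
      by (simp only: power_mult_distrib power_mult[symmetric] mult.commute[of "e i" d])
    then have "A i * (p ^ e i * \<xi> i) ^ d = p ^ (r i + d * e i) * (U i * \<xi> i ^ d)"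
      by (simp add: decomp[OF that] power_add ac_simps)
    then show ?thesis using e that by (simp add: power_add ac_simps)
  qed
  have "(\<Sum>i<s. A i * (if i \<in> I then p ^ e i * \<xi> i else 0) ^ d) = (\<Sum>i\<in>I. A i * (p ^ e i * \<xi> i) ^ d)"
    using I d by (intro sum.mono_neutral_cong_right) (auto simp: power_0_left)
  also have "\<dots> = p ^ (k + d * M) * (\<Sum>i\<in>I. p ^ c i * U i * \<xi> i ^ d)"
    by (simp add: scaled sum_distrib_left)
  finally show ?thesis using zero by auto
qed

lemma Z2_bounds: "x \<in> Z2 \<Longrightarrow> 0 \<le> x n \<and> x n < 2 ^ n"
  by (simp add: Z2_def)

lemma Z2_mod_self: "x \<in> Z2 \<Longrightarrow> x n mod 2 ^ n = x n"
  using Z2_bounds[of x n] by simp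

lemma Z2_mod_Suc: "x \<in> Z2 \<Longrightarrow> x (Suc n) mod 2 ^ n = x n"
  by (simp add: Z2_def)

lemma Z2_cong_Suc: "x \<in> Z2 \<Longrightarrow> [x (Suc n) = x n] (mod 2 ^ n)"
  by (simp add: cong_def Z2_mod_Suc Z2_mod_self)

lemma Z2_mod_le: "x \<in> Z2 \<Longrightarrow> j \<le> n \<Longrightarrow> x n mod 2 ^ j = x j"
proof (induction n)
  case 0
  then show ?case using Z2_bounds[of x 0] by simp
next
  case (Suc n)
  show ?case
  proof (cases "j = Suc n")
    case True
    then show ?thesis using Z2_mod_self[OF Suc.prems(1), of "Suc n"] by simp
  next
    case False
    then have "j \<le> n" using Suc by simp
    then have "x (Suc n) mod 2 ^ j = (x (Suc n) mod 2 ^ n) mod 2 ^ j"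
      by (simp add: mod_mod_cancel le_imp_power_dvd)
    then show ?thesis using Suc \<open>j \<le> n\<close> by (simp add: Z2_mod_Suc)
  qed
qed

lemma Z2_reduce:
  assumes "\<And>n. [F (Suc n) = F n] (mod 2 ^ n)"
  shows "(\<lambda>n. F n mod 2 ^ n) \<in> Z2"
proof -
  have "(F (Suc n) mod 2 ^ Suc n) mod 2 ^ n = F n mod 2 ^ n" for n
    using assms[of n] by (simp add: mod_mod_cancel cong_def)
  then show ?thesis by (simp add: Z2_def)
qed

lemma Z2_diagonal:
  assumes "\<And>n. X n \<in> Z2" "\<And>n. X (Suc n) n = X n n"
  shows "(\<lambda>n. X n n) \<in> Z2"
  using assms Z2_bounds[OF assms(1)] Z2_mod_Suc[OF assms(1)] by (simp add: Z2_def)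

lemma Z2_eqI: "x \<in> Z2 \<Longrightarrow> y \<in> Z2 \<Longrightarrow> (\<And>n. x n mod 2 ^ n = y n mod 2 ^ n) \<Longrightarrow> x = y"
  by (rule ext) (metis Z2_mod_self)

lemma z2_of_int_Z2: "z2_of_int k \<in> Z2"
  unfolding z2_of_int_def Z2_def by (simp add: mod_mod_cancel)

lemma z2_of_int_apply: "z2_of_int k n = k mod 2 ^ n"
  by (simp add: z2_of_int_def)

abbreviation pi_trace :: "int \<Rightarrow> int" where "pi_trace D \<equiv> fst (Kpar D)"
abbreviation pi_norm :: "int \<Rightarrow> int" where "pi_norm D \<equiv> snd (Kpar D)"

definition ok_neg :: "ok \<Rightarrow> ok" where
  "ok_neg u = ((\<lambda>n. (- fst u n) mod 2 ^ n), (\<lambda>n. (- snd u n) mod 2 ^ n))"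

lemma ok_component_simps:
  "fst (ok_add u v) n = (fst u n + fst v n) mod 2 ^ n"
  "snd (ok_add u v) n = (snd u n + snd v n) mod 2 ^ n"
  "fst (ok_mul D u v) n = (fst u n * fst v n - pi_norm D * (snd u n * snd v n)) mod 2 ^ n"
  "snd (ok_mul D u v) n = (fst u n * snd v n + snd u n * fst v n + pi_trace D * (snd u n * snd v n)) mod 2 ^ n"
  "fst (ok_neg u) n = (- fst u n) mod 2 ^ n"
  "snd (ok_neg u) n = (- snd u n) mod 2 ^ n"
  by (simp_all add: ok_add_def ok_mul_def ok_neg_def z2_add_def z2_mul_def z2_of_int_def
      split_def Let_def mod_simps)

lemma mem_O_set_iff: "u \<in> O_set \<longleftrightarrow> fst u \<in> Z2 \<and> snd u \<in> Z2"
  by (cases u) (simp add: O_set_def)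

lemma O_set_reduce:
  assumes "\<And>n. [F (Suc n) = F n] (mod 2 ^ n)" "\<And>n. [G (Suc n) = G n] (mod 2 ^ n)"
  shows "((\<lambda>n. F n mod 2 ^ n), (\<lambda>n. G n mod 2 ^ n)) \<in> O_set"
  using assms by (simp add: mem_O_set_iff Z2_reduce)

lemma O_set_eqI:
  "u \<in> O_set \<Longrightarrow> v \<in> O_set \<Longrightarrow> (\<And>n. fst u n mod 2 ^ n = fst v n mod 2 ^ n)
   \<Longrightarrow> (\<And>n. snd u n mod 2 ^ n = snd v n mod 2 ^ n) \<Longrightarrow> u = v"
  unfolding mem_O_set_iff by (metis Z2_eqI prod.expand)

lemma O_set_cong_Suc:
  "u \<in> O_set \<Longrightarrow> [fst u (Suc n) = fst u n] (mod 2 ^ n)"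
  "u \<in> O_set \<Longrightarrow> [snd u (Suc n) = snd u n] (mod 2 ^ n)"
  by (simp_all add: mem_O_set_iff Z2_cong_Suc)

lemma ok_add_closed: "u \<in> O_set \<Longrightarrow> v \<in> O_set \<Longrightarrow> ok_add u v \<in> O_set"
  unfolding ok_add_def z2_add_def
  by (simp add: O_set_reduce cong_add O_set_cong_Suc)

lemma ok_mul_closed: "u \<in> O_set \<Longrightarrow> v \<in> O_set \<Longrightarrow> ok_mul D u v \<in> O_set"
proof -
  assume "u \<in> O_set" "v \<in> O_set"
  moreover have "ok_mul D u v = ((\<lambda>n. (fst u n * fst v n - pi_norm D * (snd u n * snd v n)) mod 2 ^ n),
      (\<lambda>n. (fst u n * snd v n + snd u n * fst v n + pi_trace D * (snd u n * snd v n)) mod 2 ^ n))"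
    by (simp add: prod_eq_iff fun_eq_iff ok_component_simps)
  ultimately show ?thesis
    by (simp add: O_set_reduce cong_add cong_diff cong_mult O_set_cong_Suc)
qed

lemma ok_neg_closed: "u \<in> O_set \<Longrightarrow> ok_neg u \<in> O_set"
  unfolding ok_neg_def
  by (rule O_set_reduce) (simp_all add: cong_minus_minus_iff O_set_cong_Suc)

lemma ok_consts_closed: "ok_zero \<in> O_set" "ok_one \<in> O_set" "ok_pi \<in> O_set"
  by (simp_all add: ok_zero_def ok_one_def ok_pi_def O_set_def z2_of_int_Z2)

section \<open>The ring of integers as a type\<close>

text \<open>The ring structure on \<open>O_set\<close> depends on \<open>D\<close>, so \<open>D\<close> is supplied by a type class parameter and
  each of the six fields becomes one instance; \<open>'a oint\<close> is then a \<open>comm_ring_1\<close>.\<close>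

class ramified_disc =
  fixes disc :: "'a itself \<Rightarrow> int"
  assumes disc_cases: "disc TYPE('a) \<in> {2, -2, 10, -10, -1, -5}"

typedef ('a::ramified_disc) oint = O_set
  by (rule exI[of _ ok_zero]) (simp add: ok_consts_closed)

lemma Rep_oint_eqI:
  assumes "\<And>n. [fst (Rep_oint x) n = fst (Rep_oint y) n] (mod 2 ^ n)"
    and "\<And>n. [snd (Rep_oint x) n = snd (Rep_oint y) n] (mod 2 ^ n)"
  shows "x = y"
  using assms Rep_oint[of x] Rep_oint[of y] by (simp add: Rep_oint_inject[symmetric] O_set_eqI cong_def)

lemma cong_mod_erase: "[a = b] (mod m) \<Longrightarrow> [a mod m = b] (mod m)" for a b m :: int
  by (simp add: cong_def)

lemma cong_by_erasure:
  "[a = a'] (mod m) \<Longrightarrow> [b = b'] (mod m) \<Longrightarrow> a' = b' \<Longrightarrow> [a = b] (mod m)" for a :: int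
  by (metis cong_sym cong_trans)

lemmas cong_erase_mods = cong_mod_erase cong_add cong_diff cong_mult cong_minus_minus_iff[THEN iffD2] cong_refl

instantiation oint :: (ramified_disc) comm_ring_1
begin

definition "0 = Abs_oint ok_zero"
definition "1 = Abs_oint ok_one"
definition "x + y = Abs_oint (ok_add (Rep_oint x) (Rep_oint y))"
definition "x * y = Abs_oint (ok_mul (disc TYPE('a)) (Rep_oint x) (Rep_oint y))"
definition "- x = Abs_oint (ok_neg (Rep_oint x))"
definition "x - y = x + - (y::'a oint)"

lemma Rep_oint_ops:
  "Rep_oint (0::'a oint) = ok_zero" "Rep_oint (1::'a oint) = ok_one"
  "Rep_oint (x + y) = ok_add (Rep_oint x) (Rep_oint y)"
  "Rep_oint (x * y) = ok_mul (disc TYPE('a)) (Rep_oint x) (Rep_oint y)"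
  "Rep_oint (- x) = ok_neg (Rep_oint x)"
  by (simp_all add: zero_oint_def one_oint_def plus_oint_def times_oint_def uminus_oint_def
      Abs_oint_inverse ok_consts_closed ok_add_closed ok_mul_closed ok_neg_closed Rep_oint)

text \<open>Every component of both sides is a polynomial in the components of the arguments with
  nested reductions mod \<open>2 ^ n\<close>; \<open>cong_erase_mods\<close> strips them all, leaving a ring identity in \<open>int\<close>.\<close>

instance
proof
  fix a b c :: "'a oint"
  note simps = Rep_oint_ops ok_component_simps ok_zero_def ok_one_def z2_of_int_apply fst_conv snd_conv
  show "a * b * c = a * (b * c)" "a * b = b * a" "1 * a = a" "a + b + c = a + (b + c)"
    "a + b = b + a" "0 + a = a" "- a + a = 0" "(a + b) * c = a * c + b * c"
    by (rule Rep_oint_eqI; simp only: simps;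
        rule cong_by_erasure, (rule cong_erase_mods)+, simp add: algebra_simps)+
  show "a - b = a + - b"
    by (simp add: minus_oint_def)
  show "(0::'a oint) \<noteq> 1"
    by (metis Rep_oint_ops(1,2) ok_zero_def ok_one_def z2_of_int_apply fst_conv
        mod_0 one_mod_two_eq_one zero_neq_one power_one_right)
qed

end

section \<open>Divisibility by powers of 2 and completeness\<close>

lemma Rep_oint_of_nat: "Rep_oint (of_nat k :: 'a::ramified_disc oint) = (z2_of_int (int k), z2_of_int 0)"
proof (induction k)
  case 0
  then show ?case by (simp add: Rep_oint_ops ok_zero_def)
next
  case (Suc k)
  then show ?case
    by (simp add: Rep_oint_ops ok_one_def ok_add_def z2_add_def z2_of_int_def fun_eq_iff mod_simps
        add.commute del: one_mod_2_pow_eq)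
qed

lemma Rep_oint_of_int: "Rep_oint (of_int k :: 'a::ramified_disc oint) = (z2_of_int k, z2_of_int 0)"
proof (cases "k \<ge> 0")
  case True
  then show ?thesis by (metis Rep_oint_of_nat of_int_of_nat_eq nonneg_int_cases)
next
  case False
  then obtain j where "k = - int j" by (metis nonpos_int_cases linear)
  then show ?thesis
    by (simp add: Rep_oint_ops Rep_oint_of_nat ok_neg_def z2_of_int_def mod_simps)
qed

lemma oint_component_simps:
  fixes x y :: "'a::ramified_disc oint"
  shows "fst (Rep_oint (x - y)) n = (fst (Rep_oint x) n - fst (Rep_oint y) n) mod 2 ^ n"
    and "snd (Rep_oint (x - y)) n = (snd (Rep_oint x) n - snd (Rep_oint y) n) mod 2 ^ n"
    and "fst (Rep_oint (of_int k * y)) n = (k * fst (Rep_oint y) n) mod 2 ^ n"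
    and "snd (Rep_oint (of_int k * y)) n = (k * snd (Rep_oint y) n) mod 2 ^ n"
    and "fst (Rep_oint (of_int k :: 'a oint)) n = k mod 2 ^ n"
    and "snd (Rep_oint (of_int k :: 'a oint)) n = 0"
  unfolding minus_oint_def Rep_oint_ops ok_component_simps Rep_oint_of_int z2_of_int_apply fst_conv snd_conv
  by (simp_all only: mod_add_right_eq diff_conv_add_uminus) (simp_all add: mod_mult_left_eq)

lemma Rep_oint_Z2: "fst (Rep_oint x) \<in> Z2" "snd (Rep_oint x) \<in> Z2"
  using Rep_oint[of x] by (simp_all add: mem_O_set_iff)

lemma Z2_div_power:
  assumes "h \<in> Z2" "h n = 0"
  shows "(\<lambda>j. h (j + n) div 2 ^ n) \<in> Z2" and "[h j = 2 ^ n * (h (j + n) div 2 ^ n)] (mod 2 ^ j)"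
proof -
  have dvd: "2 ^ n dvd h (i + n)" for i
    using Z2_mod_le[OF assms(1), of n "i + n"] assms(2) by (simp add: dvd_eq_mod_eq_0)
  then show "[h j = 2 ^ n * (h (j + n) div 2 ^ n)] (mod 2 ^ j)"
    using Z2_mod_le[OF assms(1), of j "j + n"] Z2_mod_self[OF assms(1), of j] by (simp add: cong_def)
  have "0 \<le> h (i + n) div 2 ^ n \<and> h (i + n) div 2 ^ n < 2 ^ i" for i
  proof -
    obtain q where q: "h (i + n) = 2 ^ n * q" using dvd by blast
    have "0 \<le> 2 ^ n * q" "2 ^ n * q < 2 ^ n * 2 ^ i"
      using Z2_bounds[OF assms(1), of "i + n"] by (simp_all add: q power_add mult.commute)
    then show ?thesis by (simp add: q zero_le_mult_iff)
  qed
  moreover have "(h (Suc i + n) div 2 ^ n) mod 2 ^ i = h (i + n) div 2 ^ n" for i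
  proof -
    have "h (Suc i + n) mod (2 ^ n * 2 ^ i) = h (i + n)"
      using Z2_mod_Suc[OF assms(1), of "i + n"] by (simp add: power_add mult.commute)
    moreover have "h (Suc i + n) mod (2 ^ n * 2 ^ i) = 2 ^ n * ((h (Suc i + n) div 2 ^ n) mod 2 ^ i)"
      using dvd[of "Suc i"] by (metis dvd_mult_div_cancel mult_mod_right)
    ultimately show ?thesis
      using dvd[of i] by (metis nonzero_mult_div_cancel_left power_not_zero zero_neq_numeral)
  qed
  ultimately show "(\<lambda>j. h (j + n) div 2 ^ n) \<in> Z2" by (simp add: Z2_def)
qed

lemma two_power_dvd_iff:
  "(2::'a::ramified_disc oint) ^ n dvd x \<longleftrightarrow> fst (Rep_oint x) n = 0 \<and> snd (Rep_oint x) n = 0"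
proof
  assume "2 ^ n dvd x"
  then obtain y where "x = 2 ^ n * y" by auto
  then have "x = of_int (2 ^ n) * y" by simp
  then show "fst (Rep_oint x) n = 0 \<and> snd (Rep_oint x) n = 0"
    by (simp only: oint_component_simps) simp
next
  assume zero: "fst (Rep_oint x) n = 0 \<and> snd (Rep_oint x) n = 0"
  define f g where "f = fst (Rep_oint x)" and "g = snd (Rep_oint x)"
  define y :: "'a oint"
    where "y = Abs_oint ((\<lambda>j. f (j + n) div 2 ^ n), (\<lambda>j. g (j + n) div 2 ^ n))"
  have Rep_y: "Rep_oint y = ((\<lambda>j. f (j + n) div 2 ^ n), (\<lambda>j. g (j + n) div 2 ^ n))"
    unfolding y_def using zero Rep_oint_Z2[of x]
    by (intro Abs_oint_inverse) (simp add: mem_O_set_iff Z2_div_power(1) f_def g_def)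
  have "x = of_int (2 ^ n) * y"
  proof (rule Rep_oint_eqI)
    fix j
    show "[fst (Rep_oint x) j = fst (Rep_oint (of_int (2 ^ n) * y)) j] (mod 2 ^ j)"
      unfolding oint_component_simps Rep_y fst_conv
      using Z2_div_power(2)[OF Rep_oint_Z2(1), of x n j] zero by (simp add: f_def)
    show "[snd (Rep_oint x) j = snd (Rep_oint (of_int (2 ^ n) * y)) j] (mod 2 ^ j)"
      unfolding oint_component_simps Rep_y snd_conv
      using Z2_div_power(2)[OF Rep_oint_Z2(2), of x n j] zero by (simp add: g_def)
  qed
  then show "2 ^ n dvd x" by simp
qed

lemma two_power_dvd_all_imp_zero: "(\<And>n. (2::'a::ramified_disc oint) ^ n dvd x) \<Longrightarrow> x = 0"
  by (rule Rep_oint_eqI) (simp_all add: two_power_dvd_iff Rep_oint_ops ok_zero_def z2_of_int_apply)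

lemma two_adic_limit:
  fixes s :: "nat \<Rightarrow> 'a::ramified_disc oint"
  assumes "\<And>n. 2 ^ n dvd s (Suc n) - s n"
  shows "\<exists>L. \<forall>n. 2 ^ n dvd L - s n"
proof -
  have stable: "fst (Rep_oint (s (Suc n))) n = fst (Rep_oint (s n)) n"
    "snd (Rep_oint (s (Suc n))) n = snd (Rep_oint (s n)) n" for n
    using assms[of n] Z2_mod_self[OF Rep_oint_Z2(1)] Z2_mod_self[OF Rep_oint_Z2(2)]
    unfolding two_power_dvd_iff oint_component_simps by (metis mod_eq_dvd_iff dvd_eq_mod_eq_0)+
  define L :: "'a oint" where "L = Abs_oint ((\<lambda>n. fst (Rep_oint (s n)) n), (\<lambda>n. snd (Rep_oint (s n)) n))"
  have "Rep_oint L = ((\<lambda>n. fst (Rep_oint (s n)) n), (\<lambda>n. snd (Rep_oint (s n)) n))"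
    unfolding L_def using Z2_diagonal[of "\<lambda>n. fst (Rep_oint (s n))"] Z2_diagonal[of "\<lambda>n. snd (Rep_oint (s n))"]
    by (intro Abs_oint_inverse) (simp add: mem_O_set_iff Rep_oint_Z2 stable)
  then have "2 ^ n dvd L - s n" for n
    by (simp add: two_power_dvd_iff oint_component_simps)
  then show ?thesis by blast
qed

section \<open>The uniformizer and the units\<close>

lemma pi_trace_norm_Eisenstein:
  obtains a b where "pi_trace (disc TYPE('a::ramified_disc)) = 2 * b" "pi_norm (disc TYPE('a)) = - 2 * a" "odd a"
proof (rule that)
  have "even (pi_trace (disc TYPE('a))) \<and> even (pi_norm (disc TYPE('a))) \<and> odd (pi_norm (disc TYPE('a)) div 2)"
    using disc_cases[where 'a='a] by (auto simp: Kpar_def)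
  then show "pi_trace (disc TYPE('a)) = 2 * (pi_trace (disc TYPE('a)) div 2)"
    and "pi_norm (disc TYPE('a)) = - 2 * (- (pi_norm (disc TYPE('a)) div 2))"
    and "odd (- (pi_norm (disc TYPE('a)) div 2))"
    by simp_all
qed

definition \<pi> :: "'a::ramified_disc oint" where "\<pi> = Abs_oint ok_pi"

lemma Rep_oint_pi: "Rep_oint (\<pi>::'a::ramified_disc oint) = ok_pi"
  by (simp add: \<pi>_def Abs_oint_inverse ok_consts_closed)

lemma pi_squared: "(\<pi>::'a::ramified_disc oint) ^ 2 = of_int (pi_trace (disc TYPE('a))) * \<pi> - of_int (pi_norm (disc TYPE('a)))"
  by (rule Rep_oint_eqI) (simp_all add: power2_eq_square oint_component_simps Rep_oint_ops
      ok_component_simps Rep_oint_pi ok_pi_def z2_of_int_apply mod_simps)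

lemma unit_of_two_dvd_one_minus:
  fixes u :: "'a::ramified_disc oint"
  assumes "2 dvd 1 - u"
  shows "u dvd 1"
proof -
  define s where "s n = (\<Sum>i<n. (1 - u) ^ i)" for n
  have pow: "2 ^ n dvd (1 - u) ^ n" for n
    using assms by (simp add: dvd_power_same)
  then have "2 ^ n dvd s (Suc n) - s n" for n
    by (simp add: s_def)
  then obtain L where L: "\<And>n. 2 ^ n dvd L - s n"
    using two_adic_limit by blast
  have "2 ^ n dvd u * L - 1" for n
  proof -
    have "u * L - 1 = u * (L - s n) - (1 - u) ^ n"
      using one_diff_power_eq[of "1 - u" n] by (simp add: s_def algebra_simps)
    then show ?thesis
      using L[of n] pow[of n] by (metis dvd_diff dvd_mult)
  qed
  then have "u * L - 1 = 0"
    by (rule two_power_dvd_all_imp_zero)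
  then show ?thesis by (metis dvdI eq_iff_diff_eq_0)
qed

text \<open>With \<open>\<pi> ^ 2 = 2 b \<pi> + 2 a\<close>, the factor \<open>a + b \<pi>\<close> times its conjugate \<open>a + 2 b ^ 2 - b \<pi>\<close>
  is the odd integer \<open>a ^ 2\<close>.\<close>

lemma pi_sq_eq_two_mult_unit: "\<exists>v. (\<pi>::'a::ramified_disc oint) ^ 2 = 2 * v \<and> v dvd 1"
proof -
  obtain a b where t: "pi_trace (disc TYPE('a)) = 2 * b" and n: "pi_norm (disc TYPE('a)) = - 2 * a"
    and "odd a"
    by (rule pi_trace_norm_Eisenstein)
  define v :: "'a oint" where "v = of_int a + of_int b * \<pi>"
  have pi_v: "\<pi> ^ 2 = 2 * v"
    unfolding v_def pi_squared t n by (simp add: algebra_simps)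
  have "v * (of_int (a + 2 * b * b) - of_int b * \<pi>)
      = of_int (a * a + 2 * a * b * b) + of_int (2 * b * b * b) * \<pi> - of_int (b * b) * \<pi> ^ 2"
    unfolding v_def by (simp add: algebra_simps power2_eq_square)
  also have "\<dots> = of_int (a * a)"
    unfolding pi_squared t n by (simp add: algebra_simps)
  finally have "v dvd of_int (a * a)" by (metis dvd_triv_left)
  moreover have "(of_int (a * a) :: 'a oint) dvd 1"
  proof (rule unit_of_two_dvd_one_minus)
    have "even (1 - a * a)" using \<open>odd a\<close> by simp
    then obtain k where "1 - a * a = 2 * k" by (rule evenE)
    then have "(1::'a oint) - of_int (a * a) = 2 * of_int k" by (metis of_int_diff of_int_1 of_int_mult of_int_numeral)
    then show "2 dvd (1::'a oint) - of_int (a * a)" by simp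
  qed
  ultimately show ?thesis using pi_v dvd_trans by blast
qed

lemma two_eq_pi_sq_mult_unit: "\<exists>w. 2 = (\<pi>::'a::ramified_disc oint) ^ 2 * w \<and> w dvd 1"
proof -
  obtain v :: "'a oint" where v: "\<pi> ^ 2 = 2 * v" "v dvd 1"
    using pi_sq_eq_two_mult_unit by blast
  from v(2) obtain w where w: "1 = v * w" by (rule dvdE)
  then have "2 = \<pi> ^ 2 * w" by (metis v(1) mult.assoc mult.commute mult_1)
  moreover have "w dvd 1" using w by (metis dvd_triv_right)
  ultimately show ?thesis by blast
qed

lemma pi_sq_dvd_two: "(\<pi>::'a::ramified_disc oint) ^ 2 dvd 2"
  using two_eq_pi_sq_mult_unit by (metis dvd_triv_left)

lemma pi_dvd_two: "(\<pi>::'a::ramified_disc oint) dvd 2"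
  using pi_sq_dvd_two by (metis dvd_mult_left power2_eq_square)

lemma pi_power_dvd_two_power: "(\<pi>::'a::ramified_disc oint) ^ (2 * n) dvd 2 ^ n"
  by (simp add: power_mult pi_sq_dvd_two dvd_power_same)

lemma two_power_dvd_pi_power: "(2::'a::ramified_disc oint) ^ n dvd \<pi> ^ (2 * n)"
  using pi_sq_eq_two_mult_unit by (metis dvd_power_same dvd_triv_left power_mult)

lemma pi_dvd_or_pi_dvd_diff_one: "(\<pi>::'a::ramified_disc oint) dvd x \<or> \<pi> dvd x - 1"
proof -
  define c0 c1 where "c0 = fst (Rep_oint x) 1" and "c1 = snd (Rep_oint x) 1"
  have "c0 = 0 \<or> c0 = 1"
    using Z2_bounds[OF Rep_oint_Z2(1), of x 1] by (auto simp: c0_def)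
  have "(2::'a oint) ^ 1 dvd x - of_int c0 - of_int c1 * \<pi>"
    unfolding two_power_dvd_iff oint_component_simps
    by (simp add: Rep_oint_pi ok_pi_def z2_of_int_apply c0_def c1_def mod_simps)
  then have "\<pi> dvd x - of_int c0 - of_int c1 * \<pi>"
    using pi_dvd_two dvd_trans by auto
  then have "\<pi> dvd (x - of_int c0 - of_int c1 * \<pi>) + of_int c1 * \<pi>"
    by (rule dvd_add) simp
  then have "\<pi> dvd x - of_int c0" by simp
  then show ?thesis using \<open>c0 = 0 \<or> c0 = 1\<close> by auto
qed

lemma not_pi_dvd_one: "\<not> (\<pi>::'a::ramified_disc oint) dvd 1"
proof
  assume "\<pi> dvd (1::'a oint)"
  then have "\<pi> ^ 2 dvd (1::'a oint) ^ 2" by (rule dvd_power_same)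
  moreover obtain v :: "'a oint" where "\<pi> ^ 2 = 2 * v" using pi_sq_eq_two_mult_unit by blast
  ultimately have "2 * v dvd 1" by simp
  then have "(2::'a oint) dvd 1" by (rule dvd_mult_left)
  then show False
    using two_power_dvd_iff[of 1 "1::'a oint"] by (simp add: Rep_oint_ops ok_one_def z2_of_int_apply)
qed

lemma not_pi_dvd_iff: "\<not> (\<pi>::'a::ramified_disc oint) dvd x \<longleftrightarrow> \<pi> dvd x - 1"
proof
  show "\<pi> dvd x - 1" if "\<not> \<pi> dvd x"
    using that pi_dvd_or_pi_dvd_diff_one by blast
  show "\<not> \<pi> dvd x" if "\<pi> dvd x - 1"
  proof
    assume "\<pi> dvd x"
    then have "\<pi> dvd x - (x - 1)" using that by (rule dvd_diff)
    then show False using not_pi_dvd_one[where 'a='a] by simp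
  qed
qed

lemma unit_iff_not_pi_dvd: "(u::'a::ramified_disc oint) dvd 1 \<longleftrightarrow> \<not> \<pi> dvd u"
proof
  assume "u dvd 1"
  then show "\<not> \<pi> dvd u" using not_pi_dvd_one dvd_trans by blast
next
  assume "\<not> \<pi> dvd u"
  then obtain w where w: "u - 1 = \<pi> * w" using not_pi_dvd_iff by blast
  obtain v :: "'a oint" where v: "\<pi> ^ 2 = 2 * v" "v dvd 1" using pi_sq_eq_two_mult_unit by blast
  have "1 - u * (2 - u) = (u - 1) ^ 2" by (simp add: power2_eq_square algebra_simps)
  also have "\<dots> = 2 * (v * w ^ 2)" by (simp add: w power_mult_distrib v(1))
  finally have "u * (2 - u) dvd 1" by (intro unit_of_two_dvd_one_minus) simp
  then show "u dvd 1" by (rule dvd_mult_left)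
qed

lemma pi_dvd_add_units:
  "u dvd 1 \<Longrightarrow> v dvd 1 \<Longrightarrow> (\<pi>::'a::ramified_disc oint) dvd u + v"
proof -
  assume "u dvd 1" "v dvd 1"
  then have "\<pi> dvd u - 1" "\<pi> dvd v - 1"
    using unit_iff_not_pi_dvd not_pi_dvd_iff by blast+
  then have "\<pi> dvd (u - 1) + (v - 1) + 2"
    using pi_dvd_two by (intro dvd_add)
  then show ?thesis by (simp add: algebra_simps)
qed

lemma pi_power_dvd_all_imp_zero: "(\<And>n. (\<pi>::'a::ramified_disc oint) ^ n dvd x) \<Longrightarrow> x = 0"
  by (rule two_power_dvd_all_imp_zero) (use two_power_dvd_pi_power dvd_trans in blast)

lemma pi_adic_limit:
  fixes s :: "nat \<Rightarrow> 'a::ramified_disc oint"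
  assumes steps: "\<And>n. \<pi> ^ n dvd s (Suc n) - s n"
  shows "\<exists>L. \<forall>n. \<pi> ^ n dvd L - s n"
proof -
  have "\<pi> ^ (2 * n) dvd s (2 * Suc n) - s (2 * n)" for n
    using power_dvd_diff_of_steps[OF steps, of "2 * n" "2 * Suc n"] by simp
  then have "2 ^ n dvd s (2 * Suc n) - s (2 * n)" for n
    using two_power_dvd_pi_power dvd_trans by blast
  then obtain L where L: "\<And>n. 2 ^ n dvd L - s (2 * n)"
    using two_adic_limit[of "\<lambda>n. s (2 * n)"] by auto
  have "\<pi> ^ n dvd (L - s (2 * n)) + (s (2 * n) - s n)" for n
  proof (rule dvd_add)
    have "\<pi> ^ (2 * n) dvd L - s (2 * n)"
      using pi_power_dvd_two_power L by (rule dvd_trans)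
    then show "\<pi> ^ n dvd L - s (2 * n)"
      using le_imp_power_dvd[of n "2 * n" \<pi>] dvd_trans by auto
    show "\<pi> ^ n dvd s (2 * n) - s n"
      using power_dvd_diff_of_steps[OF steps, of n "2 * n"] by simp
  qed
  then show ?thesis by auto
qed

lemma two_mult_eq_zeroD:
  assumes "2 * y = (0::'a::ramified_disc oint)"
  shows "y = 0"
proof (rule Rep_oint_eqI)
  fix n
  have "of_int 2 * y = (0::'a oint)" using assms by simp
  then have "fst (Rep_oint (of_int 2 * y :: 'a oint)) (Suc n) = 0"
    and "snd (Rep_oint (of_int 2 * y :: 'a oint)) (Suc n) = 0"
    by (simp_all add: Rep_oint_ops ok_zero_def z2_of_int_apply)
  then have "(2 * fst (Rep_oint y) (Suc n)) mod 2 ^ Suc n = 0"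
    and "(2 * snd (Rep_oint y) (Suc n)) mod 2 ^ Suc n = 0"
    by (simp_all only: oint_component_simps)
  then have "2 ^ n dvd fst (Rep_oint y) (Suc n)" "2 ^ n dvd snd (Rep_oint y) (Suc n)"
    by (simp_all add: dvd_eq_mod_eq_0[symmetric])
  then show "[fst (Rep_oint y) n = fst (Rep_oint 0) n] (mod 2 ^ n)"
    and "[snd (Rep_oint y) n = snd (Rep_oint 0) n] (mod 2 ^ n)"
    using Z2_mod_Suc[OF Rep_oint_Z2(1), of y n] Z2_mod_Suc[OF Rep_oint_Z2(2), of y n]
    by (simp_all add: Rep_oint_ops ok_zero_def z2_of_int_apply cong_def dvd_eq_mod_eq_0)
qed

lemma pi_mult_eq_zeroD:
  assumes "\<pi> * x = (0::'a::ramified_disc oint)"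
  shows "x = 0"
proof -
  obtain v :: "'a oint" where v: "\<pi> ^ 2 = 2 * v" "v dvd 1" using pi_sq_eq_two_mult_unit by blast
  have "2 * (v * x) = \<pi> ^ 2 * x" by (simp add: v(1) mult.assoc)
  also have "\<dots> = \<pi> * (\<pi> * x)" by (simp add: power2_eq_square mult.assoc)
  finally have "v * x = 0" using assms by (simp add: two_mult_eq_zeroD)
  moreover from v(2) obtain w where "1 = v * w" by (rule dvdE)
  then have "x = w * (v * x)" by (metis mult.assoc mult.commute mult_1)
  ultimately show ?thesis by simp
qed

lemma pi_power_neq_zero: "(\<pi>::'a::ramified_disc oint) ^ n \<noteq> 0"
proof (induction n)
  case (Suc n)
  then show ?case using pi_mult_eq_zeroD[of "\<pi> ^ n"] by auto
qed simp

lemma pi_power_mult_unit: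
  assumes "(x::'a::ramified_disc oint) \<noteq> 0"
  obtains r u where "x = \<pi> ^ r * u" "u dvd 1"
proof -
  have "\<exists>r. \<not> \<pi> ^ Suc r dvd x"
  proof (rule ccontr)
    assume "\<nexists>r. \<not> \<pi> ^ Suc r dvd x"
    then have "\<pi> ^ r dvd x" for r by (cases r) auto
    then show False using assms pi_power_dvd_all_imp_zero by blast
  qed
  then obtain r where r: "\<not> \<pi> ^ Suc r dvd x" "\<And>m. m < r \<Longrightarrow> \<pi> ^ Suc m dvd x"
    unfolding exists_least_iff[of "\<lambda>r. \<not> \<pi> ^ Suc r dvd x"] by blast
  have "\<pi> ^ r dvd x"
    using r(2)[of "r - 1"] by (cases r) auto
  then obtain u where u: "x = \<pi> ^ r * u" by (rule dvdE)
  moreover have "\<not> \<pi> dvd u"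
  proof
    assume "\<pi> dvd u"
    then have "\<pi> ^ r * \<pi> dvd \<pi> ^ r * u" by (rule mult_dvd_mono[OF dvd_refl])
    then show False using r(1) u by (simp add: mult.commute)
  qed
  ultimately show ?thesis using that unit_iff_not_pi_dvd by blast
qed

definition pi_digit :: "'a::ramified_disc oint \<Rightarrow> nat \<Rightarrow> bool" where
  "pi_digit U c \<longleftrightarrow> c \<in> {0, 1} \<and> (\<exists>W. U = 1 + of_nat c * \<pi> + \<pi> ^ 2 * W)"

lemma pi_digit_exists:
  assumes "(U::'a::ramified_disc oint) dvd 1"
  shows "\<exists>c. pi_digit U c"
proof -
  obtain y where y: "U - 1 = \<pi> * y"
    using assms by (auto simp: unit_iff_not_pi_dvd not_pi_dvd_iff)
  show ?thesis
  proof (cases "\<pi> dvd y")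
    case True
    then obtain W where "y = \<pi> * W" by (rule dvdE)
    then have "U = 1 + of_nat 0 * \<pi> + \<pi> ^ 2 * W" using y by (simp add: algebra_simps power2_eq_square)
    then show ?thesis unfolding pi_digit_def by blast
  next
    case False
    then obtain W where "y - 1 = \<pi> * W" by (auto simp: not_pi_dvd_iff)
    then have "U = 1 + of_nat 1 * \<pi> + \<pi> ^ 2 * W" using y by (simp add: algebra_simps power2_eq_square)
    then show ?thesis unfolding pi_digit_def by blast
  qed
qed

lemma pi_digit_unique:
  assumes "pi_digit (U::'a::ramified_disc oint) c" "pi_digit U c'"
  shows "c = c'"
proof (rule ccontr)
  assume "c \<noteq> c'"
  obtain W W' where c: "c \<in> {0, 1}" "c' \<in> {0, 1}"
    and U: "U = 1 + of_nat c * \<pi> + \<pi> ^ 2 * W" "U = 1 + of_nat c' * \<pi> + \<pi> ^ 2 * W'"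
    using assms unfolding pi_digit_def by blast
  from c \<open>c \<noteq> c'\<close> have "(c = 1 \<and> c' = 0) \<or> (c = 0 \<and> c' = 1)" by auto
  then obtain V V' :: "'a oint" where eq: "1 + \<pi> + \<pi> ^ 2 * V = 1 + \<pi> ^ 2 * V'"
  proof
    assume "c = 1 \<and> c' = 0"
    then show thesis using that[of W W'] U by simp
  next
    assume "c = 0 \<and> c' = 1"
    then show thesis using that[of W' W] U by simp
  qed
  have "\<pi> * (1 + \<pi> * (V - V')) = (1 + \<pi> + \<pi> ^ 2 * V) - (1 + \<pi> ^ 2 * V')"
    by (simp add: algebra_simps power2_eq_square)
  also have "\<dots> = 0" by (simp only: eq diff_self)
  finally have "1 + \<pi> * (V - V') = 0" by (rule pi_mult_eq_zeroD)
  then have "1 = - (\<pi> * (V - V'))" by (rule eq_neg_iff_add_eq_0[THEN iffD2])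
  then have "1 = \<pi> * - (V - V')" by (simp only: mult_minus_right)
  then have "\<pi> dvd (1::'a oint)" by (rule dvdI)
  then show False using not_pi_dvd_one by blast
qed

section \<open>Hensel's lemma for \<open>d\<close>-th powers\<close>

lemma unit_of_odd: "odd m \<Longrightarrow> (of_nat m :: 'a::ramified_disc oint) dvd 1"
proof (rule unit_of_two_dvd_one_minus)
  assume "odd m"
  then obtain k where "m = 2 * k + 1" by (rule oddE)
  then have "1 - (of_nat m :: 'a oint) = 2 * - of_nat k" by simp
  then show "2 dvd 1 - (of_nat m :: 'a oint)" by (metis dvd_triv_left)
qed

lemma one_plus_pi_power:
  assumes "odd m"
  shows "\<exists>V. (1 + \<pi>) ^ (2 * m) = 1 + (\<pi>::'a::ramified_disc oint) ^ 2 * V \<and> V dvd 1"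
proof -
  obtain w :: "'a oint" where w: "2 = \<pi> ^ 2 * w" using two_eq_pi_sq_mult_unit by blast
  define X where "X = (1 + (\<pi>::'a oint)) ^ 2"
  define W where "W = 1 + w * \<pi>"
  define S where "S = (\<Sum>j<m. X ^ j)"
  have X: "X = 1 + \<pi> ^ 2 * W"
    unfolding X_def W_def by (simp add: power2_eq_square algebra_simps w)
  have X1: "X - 1 = \<pi> * (\<pi> * W)"
    by (simp add: X power2_eq_square mult.assoc)
  have "(1 + \<pi>) ^ (2 * m) = X ^ m"
    by (simp add: X_def power_mult)
  also have "\<dots> = 1 + (X - 1) * S"
    using power_diff_1_eq[of X m] by (simp add: S_def diff_eq_eq)
  also have "\<dots> = 1 + \<pi> ^ 2 * (W * S)"
    by (simp add: X1 power2_eq_square mult.assoc)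
  finally have "(1 + \<pi>) ^ (2 * m) = 1 + \<pi> ^ 2 * (W * S)" .
  moreover have "W dvd 1"
    by (simp add: unit_iff_not_pi_dvd not_pi_dvd_iff W_def)
  moreover have "S dvd 1"
  proof -
    have "\<pi> dvd X ^ j - 1" for j
      unfolding power_diff_1_eq X1 by (simp add: mult.assoc)
    then have "\<pi> dvd (\<Sum>j<m. X ^ j - 1)" by (simp add: dvd_sum)
    moreover have "\<pi> dvd of_nat m - 1"
      using unit_of_odd[OF assms] by (simp add: unit_iff_not_pi_dvd not_pi_dvd_iff)
    ultimately have "\<pi> dvd (\<Sum>j<m. X ^ j - 1) + (of_nat m - 1)" by (rule dvd_add)
    then show ?thesis by (simp add: unit_iff_not_pi_dvd not_pi_dvd_iff S_def sum_subtractf)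
  qed
  ultimately show ?thesis using unit_mult by blast
qed

lemma pi_power_Suc_dvd_or_add_unit:
  fixes S U :: "'a::ramified_disc oint"
  assumes "\<pi> ^ j dvd S" "U dvd 1"
  shows "\<pi> ^ Suc j dvd S \<or> \<pi> ^ Suc j dvd S + \<pi> ^ j * U"
proof -
  obtain s where s: "S = \<pi> ^ j * s" using assms(1) by (rule dvdE)
  show ?thesis
  proof (cases "\<pi> dvd s")
    case True
    then have "\<pi> ^ j * \<pi> dvd \<pi> ^ j * s" by (rule mult_dvd_mono[OF dvd_refl])
    then show ?thesis by (simp add: s mult.commute)
  next
    case False
    then have "\<pi> dvd s + U" using assms(2) by (simp add: pi_dvd_add_units unit_iff_not_pi_dvd)
    then have "\<pi> ^ j * \<pi> dvd \<pi> ^ j * (s + U)" by (rule mult_dvd_mono[OF dvd_refl])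
    then have "\<pi> ^ Suc j dvd S + \<pi> ^ j * U" by (simp only: s power_Suc2 distrib_left)
    then show ?thesis by blast
  qed
qed

text \<open>Since \<open>2 = \<pi> ^ 2 * unit\<close> and \<open>m\<close> is odd, the linear term \<open>2 m u t ^ (2 m - 1) \<pi> ^ (N - 2)\<close>
  of the expansion is a unit multiple of \<open>\<pi> ^ N\<close>.\<close>

lemma unit_power_correction:
  fixes u t :: "'a::ramified_disc oint"
  assumes m: "odd m" and u: "u dvd 1" and t: "t dvd 1" and N: "2 \<le> N"
  obtains U Q where "U dvd 1"
    "u * (t + \<pi> ^ (N - 2)) ^ (2 * m) = u * t ^ (2 * m) + \<pi> ^ N * U + (\<pi> ^ (N - 2)) ^ 2 * Q"
proof -
  obtain w :: "'a oint" where w: "2 = \<pi> ^ 2 * w" "w dvd 1" using two_eq_pi_sq_mult_unit by blast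
  define h where "h = (\<pi>::'a oint) ^ (N - 2)"
  define U where "U = u * w * of_nat m * t ^ (2 * m - 1)"
  have "Suc (2 * m - 1) = 2 * m" using m by (cases m) auto
  then obtain Q where Q: "(t + h) ^ (2 * m) = t ^ (2 * m) + of_nat (2 * m) * t ^ (2 * m - 1) * h + h ^ 2 * Q"
    using power_add_first_order[of t h "2 * m - 1"] by metis
  have "\<pi> ^ 2 * h = \<pi> ^ (2 + (N - 2))"
    by (simp only: h_def power_add)
  also have "2 + (N - 2) = N" using N by simp
  finally have pi_N: "\<pi> ^ 2 * h = \<pi> ^ N" .
  have "u * (of_nat (2 * m) * t ^ (2 * m - 1) * h) = 2 * h * (u * of_nat m * t ^ (2 * m - 1))"
    by (simp add: algebra_simps)
  also have "\<dots> = (\<pi> ^ 2 * h) * U"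
    by (simp add: U_def w(1) algebra_simps)
  finally have linear: "u * (of_nat (2 * m) * t ^ (2 * m - 1) * h) = \<pi> ^ N * U"
    by (simp only: pi_N)
  have "u * (t + h) ^ (2 * m) = u * t ^ (2 * m) + u * (of_nat (2 * m) * t ^ (2 * m - 1) * h) + h ^ 2 * (u * Q)"
    unfolding Q by (simp add: algebra_simps)
  then have "u * (t + h) ^ (2 * m) = u * t ^ (2 * m) + \<pi> ^ N * U + h ^ 2 * (u * Q)"
    by (simp only: linear)
  moreover have "U dvd 1"
    unfolding U_def using u w(2) unit_of_odd[OF m] unit_power[OF t] by (intro unit_mult)
  ultimately show ?thesis using that[of U "u * Q"] by (simp add: h_def)
qed

lemma hensel_step:
  fixes u t R :: "'a::ramified_disc oint"
  assumes N: "5 \<le> N" and m: "odd m" and u: "u dvd 1" and t: "t dvd 1"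
    and approx: "\<pi> ^ N dvd u * t ^ (2 * m) + R"
  shows "\<exists>t'. t' dvd 1 \<and> \<pi> ^ Suc N dvd u * t' ^ (2 * m) + R \<and> \<pi> ^ (N - 2) dvd t' - t"
proof -
  have "2 \<le> N" using N by simp
  then obtain U Q where U: "U dvd 1"
    and expand: "u * (t + \<pi> ^ (N - 2)) ^ (2 * m) = u * t ^ (2 * m) + \<pi> ^ N * U + (\<pi> ^ (N - 2)) ^ 2 * Q"
    by (rule unit_power_correction[OF m u t])
  define h where "h = (\<pi>::'a oint) ^ (N - 2)"
  note expand = expand[folded h_def]
  from approx U consider "\<pi> ^ Suc N dvd u * t ^ (2 * m) + R"
    | "\<pi> ^ Suc N dvd (u * t ^ (2 * m) + R) + \<pi> ^ N * U"
    using pi_power_Suc_dvd_or_add_unit by blast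
  then show ?thesis
  proof cases
    case 1
    then show ?thesis using t by auto
  next
    case 2
    have "\<pi> ^ Suc N dvd h ^ 2"
      unfolding h_def power_mult[symmetric] using N by (intro le_imp_power_dvd) simp
    then have "\<pi> ^ Suc N dvd ((u * t ^ (2 * m) + R) + \<pi> ^ N * U) + h ^ 2 * Q"
      by (rule dvd_add[OF 2 dvd_mult2])
    moreover have "u * (t + h) ^ (2 * m) + R = ((u * t ^ (2 * m) + R) + \<pi> ^ N * U) + h ^ 2 * Q"
      unfolding expand by (simp add: algebra_simps)
    ultimately have "\<pi> ^ Suc N dvd u * (t + h) ^ (2 * m) + R"
      by (simp only:)
    moreover have "t + h dvd 1"
    proof -
      have "\<pi> dvd (t - 1) + h"
        using t N by (intro dvd_add) (simp_all add: unit_iff_not_pi_dvd not_pi_dvd_iff h_def dvd_power)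
      then show ?thesis by (simp add: unit_iff_not_pi_dvd not_pi_dvd_iff algebra_simps)
    qed
    ultimately show ?thesis by (intro exI[of _ "t + h"]) (simp add: h_def)
  qed
qed

lemma hensel:
  fixes u t\<^sub>0 R :: "'a::ramified_disc oint"
  assumes m: "odd m" and u: "u dvd 1" and t\<^sub>0: "t\<^sub>0 dvd 1"
    and approx: "\<pi> ^ 5 dvd u * t\<^sub>0 ^ (2 * m) + R"
  shows "\<exists>t. u * t ^ (2 * m) + R = 0"
proof -
  define G where "G t = u * t ^ (2 * m) + R" for t
  have "\<exists>T. \<forall>n. (T n dvd 1 \<and> \<pi> ^ (n + 5) dvd G (T n)) \<and> \<pi> ^ (n + 3) dvd T (Suc n) - T n"
  proof (rule dependent_nat_choice)
    show "\<exists>t. t dvd 1 \<and> \<pi> ^ (0 + 5) dvd G t"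
      using t\<^sub>0 approx by (auto simp: G_def)
  next
    fix t n
    assume "t dvd 1 \<and> \<pi> ^ (n + 5) dvd G t"
    then show "\<exists>t'. (t' dvd 1 \<and> \<pi> ^ (Suc n + 5) dvd G t') \<and> \<pi> ^ (n + 3) dvd t' - t"
      using hensel_step[of "n + 5" m u t R] m u by (simp add: G_def ac_simps)
  qed
  then obtain T where T: "\<And>n. \<pi> ^ (n + 5) dvd G (T n)" "\<And>n. \<pi> ^ (n + 3) dvd T (Suc n) - T n"
    by blast
  have "\<pi> ^ n dvd T (Suc n) - T n" for n
    using le_imp_power_dvd[of n "n + 3" \<pi>] T(2) by (rule dvd_trans) simp
  then obtain L where L: "\<And>n. \<pi> ^ n dvd L - T n"
    using pi_adic_limit by blast
  have "\<pi> ^ n dvd G L" for n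
  proof -
    have "G L = G (T n) + u * (L ^ (2 * m) - T n ^ (2 * m))"
      by (simp add: G_def algebra_simps)
    moreover have "\<pi> ^ n dvd G (T n)"
      using le_imp_power_dvd[of n "n + 5" \<pi>] T(1) by (rule dvd_trans) simp
    moreover have "\<pi> ^ n dvd L ^ (2 * m) - T n ^ (2 * m)"
      using L diff_dvd_power_diff by (rule dvd_trans)
    ultimately show ?thesis by (simp add: dvd_add dvd_mult)
  qed
  then have "G L = 0" by (rule pi_power_dvd_all_imp_zero)
  then show ?thesis unfolding G_def by blast
qed

section \<open>Diagonal forms\<close>

lemma pi_power_Suc_dvd_add_zero_or_one:
  fixes S U :: "'a::ramified_disc oint"
  assumes "\<pi> ^ j dvd S" "U dvd 1" "0 < d"
  obtains \<xi> where "\<xi> \<in> {0, 1}" "\<pi> ^ Suc j dvd S + \<pi> ^ j * U * \<xi> ^ d"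
  using pi_power_Suc_dvd_or_add_unit[OF assms(1,2)] that[of 0] that[of 1] assms(3)
  by (auto simp: power_0_left)

lemma pi_power_dvd_add_unit_power:
  fixes S U :: "'a::ramified_disc oint"
  assumes m: "odd m" and approx: "\<pi> ^ (j + 2) dvd S + \<pi> ^ j * U" and U: "U dvd 1"
  obtains \<xi> where "\<xi> dvd 1" "\<pi> ^ (j + 3) dvd S + \<pi> ^ j * U * \<xi> ^ (2 * m)"
proof -
  obtain V :: "'a oint" where V: "(1 + \<pi>) ^ (2 * m) = 1 + \<pi> ^ 2 * V" "V dvd 1"
    using one_plus_pi_power[OF m] by blast
  have expand: "S + \<pi> ^ j * U * (1 + \<pi>) ^ (2 * m) = (S + \<pi> ^ j * U) + \<pi> ^ (j + 2) * (U * V)"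
    unfolding V(1) by (simp add: power_add power2_eq_square algebra_simps)
  have "U * V dvd 1" using U V(2) by (rule unit_mult)
  with approx consider "\<pi> ^ (j + 3) dvd S + \<pi> ^ j * U"
    | "\<pi> ^ (j + 3) dvd (S + \<pi> ^ j * U) + \<pi> ^ (j + 2) * (U * V)"
    using pi_power_Suc_dvd_or_add_unit[of "j + 2"] by (auto simp: numeral_3_eq_3 numeral_2_eq_2)
  then show ?thesis
  proof cases
    case 1
    then show ?thesis using that[of 1] by simp
  next
    case 2
    moreover have "(1 + \<pi>) dvd (1::'a oint)"
      by (simp add: unit_iff_not_pi_dvd not_pi_dvd_iff)
    ultimately show ?thesis using that[of "1 + \<pi>"] by (simp only: expand)
  qed
qed

lemma unit_form_zero_levels_2_3:
  fixes uA uB uC uE :: "'a::ramified_disc oint"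
  assumes m: "odd m" and units: "uA dvd 1" "uB dvd 1" "uC dvd 1" "uE dvd 1"
    and AB: "\<pi> ^ 2 dvd uA + uB"
  shows "\<exists>t \<xi> \<zeta>. uA * t ^ (2 * m) + uB + \<pi> ^ 2 * uC * \<xi> ^ (2 * m) + \<pi> ^ 3 * uE * \<zeta> ^ (2 * m) = 0"
proof -
  have d: "0 < 2 * m" using m by (cases m) auto
  have "\<pi> ^ (0 + 2) dvd (uB + \<pi> ^ 2 * uC) + \<pi> ^ 0 * uA"
    using dvd_add[OF AB dvd_triv_left[of "\<pi> ^ 2" uC]] by (simp add: ac_simps power2_eq_square)
  then obtain t where t: "t dvd 1" "\<pi> ^ (0 + 3) dvd (uB + \<pi> ^ 2 * uC) + \<pi> ^ 0 * uA * t ^ (2 * m)"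
    by (rule pi_power_dvd_add_unit_power[OF m _ units(1)])
  then have "\<pi> ^ 3 dvd uA * t ^ (2 * m) + uB + \<pi> ^ 2 * uC"
    by (simp add: ac_simps)
  then obtain \<zeta> where "\<pi> ^ Suc 3 dvd (uA * t ^ (2 * m) + uB + \<pi> ^ 2 * uC) + \<pi> ^ 3 * uE * \<zeta> ^ (2 * m)"
    using pi_power_Suc_dvd_add_zero_or_one[OF _ units(4) d] by blast
  then have "\<pi> ^ (2 + 2) dvd (uA * t ^ (2 * m) + uB + \<pi> ^ 3 * uE * \<zeta> ^ (2 * m)) + \<pi> ^ 2 * uC"
    by (simp add: ac_simps)
  then obtain \<xi> where
    "\<pi> ^ (2 + 3) dvd (uA * t ^ (2 * m) + uB + \<pi> ^ 3 * uE * \<zeta> ^ (2 * m)) + \<pi> ^ 2 * uC * \<xi> ^ (2 * m)"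
    by (rule pi_power_dvd_add_unit_power[OF m _ units(3)])
  then have "\<pi> ^ 5 dvd uA * t ^ (2 * m) + (uB + \<pi> ^ 2 * uC * \<xi> ^ (2 * m) + \<pi> ^ 3 * uE * \<zeta> ^ (2 * m))"
    by (simp add: ac_simps)
  from hensel[OF m units(1) t(1) this] show ?thesis by (auto simp: ac_simps)
qed

lemma unit_form_zero_levels_3_4:
  fixes uA uB uC uE :: "'a::ramified_disc oint"
  assumes m: "odd m" and units: "uA dvd 1" "uB dvd 1" "uC dvd 1" "uE dvd 1"
    and AB: "\<pi> ^ 2 dvd uA + uB"
  shows "\<exists>t \<xi> \<zeta>. uA * t ^ (2 * m) + uB + \<pi> ^ 3 * uC * \<xi> ^ (2 * m) + \<pi> ^ 4 * uE * \<zeta> ^ (2 * m) = 0"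
proof -
  have d: "0 < 2 * m" using m by (cases m) auto
  have "\<pi> ^ (0 + 2) dvd uB + \<pi> ^ 0 * uA"
    using AB by (simp add: ac_simps power2_eq_square)
  then obtain t where t: "t dvd 1" "\<pi> ^ (0 + 3) dvd uB + \<pi> ^ 0 * uA * t ^ (2 * m)"
    by (rule pi_power_dvd_add_unit_power[OF m _ units(1)])
  then have "\<pi> ^ 3 dvd uA * t ^ (2 * m) + uB"
    by (simp add: ac_simps)
  then obtain \<xi> where "\<pi> ^ Suc 3 dvd (uA * t ^ (2 * m) + uB) + \<pi> ^ 3 * uC * \<xi> ^ (2 * m)"
    using pi_power_Suc_dvd_add_zero_or_one[OF _ units(3) d] by blast
  then have "\<pi> ^ 4 dvd (uA * t ^ (2 * m) + uB) + \<pi> ^ 3 * uC * \<xi> ^ (2 * m)"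
    by simp
  then obtain \<zeta> where
    "\<pi> ^ Suc 4 dvd ((uA * t ^ (2 * m) + uB) + \<pi> ^ 3 * uC * \<xi> ^ (2 * m)) + \<pi> ^ 4 * uE * \<zeta> ^ (2 * m)"
    using pi_power_Suc_dvd_add_zero_or_one[OF _ units(4) d] by blast
  then have "\<pi> ^ 5 dvd uA * t ^ (2 * m) + (uB + \<pi> ^ 3 * uC * \<xi> ^ (2 * m) + \<pi> ^ 4 * uE * \<zeta> ^ (2 * m))"
    by (simp add: ac_simps)
  from hensel[OF m units(1) t(1) this] show ?thesis by (auto simp: ac_simps)
qed

lemma unit_form_zero:
  fixes uA uB uC uE :: "'a::ramified_disc oint"
  assumes "odd m" "uA dvd 1" "uB dvd 1" "uC dvd 1" "uE dvd 1" "\<pi> ^ 2 dvd uA + uB"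
    and "(a, b) \<in> {(2, 3), (3, 4)}"
  shows "\<exists>t \<xi> \<zeta>. uA * t ^ (2 * m) + uB + \<pi> ^ a * uC * \<xi> ^ (2 * m) + \<pi> ^ b * uE * \<zeta> ^ (2 * m) = 0"
  using assms(7) unit_form_zero_levels_2_3[OF assms(1-6)] unit_form_zero_levels_3_4[OF assms(1-6)]
  by auto

theorem diagonal_form_has_zero:
  fixes A U :: "nat \<Rightarrow> 'a::ramified_disc oint" and r :: "nat \<Rightarrow> nat"
  assumes m: "odd m" "3 \<le> m" and d: "d = 2 * m"
    and decomp: "\<And>l. l < s \<Longrightarrow> A l = \<pi> ^ r l * U l" "\<And>l. l < s \<Longrightarrow> U l dvd 1"
    and pair: "i < s" "j < s" "i \<noteq> j" "r i mod d = k" "r j mod d = k" "\<pi> ^ 2 dvd U i + U j"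
    and others: "p < s" "q < s" "(a, b) \<in> {(2, 3), (3, 4)}"
      "r p mod d = (k + a) mod d" "r q mod d = (k + b) mod d"
  shows "\<exists>X. X j \<noteq> 0 \<and> (\<Sum>l<s. A l * X l ^ d) = 0"
proof -
  have "6 \<le> d" "k < d" using m d pair(4) by auto
  have ne: "l \<noteq> l'" if "r l mod d = (k + x) mod d" "r l' mod d = (k + y) mod d" "x < d" "y < d" "x \<noteq> y"
    for l l' x y
  proof
    assume "l = l'"
    then show False using that mod_add_left_cancel_less[of k x d y] by simp
  qed
  have lvl: "r i mod d = (k + 0) mod d" "r j mod d = (k + 0) mod d"
    using pair(4,5) \<open>k < d\<close> by simp_all
  have "a < d" "b < d" "0 \<noteq> a" "0 \<noteq> b" "a \<noteq> b"
    using others(3) \<open>6 \<le> d\<close> by auto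
  then have distinct: "i \<noteq> p" "i \<noteq> q" "j \<noteq> p" "j \<noteq> q" "p \<noteq> q"
    using ne[OF lvl(1) others(4)] ne[OF lvl(1) others(5)] ne[OF lvl(2) others(4)] ne[OF lvl(2) others(5)]
      ne[OF others(4) others(5)] by simp_all
  obtain t \<xi> \<zeta> where zero:
    "U i * t ^ d + U j + \<pi> ^ a * U p * \<xi> ^ d + \<pi> ^ b * U q * \<zeta> ^ d = 0"
    using unit_form_zero[OF m(1) decomp(2) decomp(2) decomp(2) decomp(2) pair(6) others(3)] pair others d
    by blast
  define I where "I = {i, j, p, q}"
  define c where "c l = (if l = p then a else if l = q then b else 0)" for l
  define y where "y l = (if l = i then t else if l = j then 1 else if l = p then \<xi> else \<zeta>)" for l
  have "(\<Sum>l\<in>I. \<pi> ^ c l * U l * y l ^ d) = 0"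
    using distinct pair(3) zero by (simp add: I_def c_def y_def ac_simps)
  moreover have "r l mod d = (k + c l) mod d" if "l \<in> I" for l
    using that pair others \<open>k < d\<close> distinct by (auto simp: I_def c_def)
  ultimately obtain e where "(\<Sum>l<s. A l * (if l \<in> I then \<pi> ^ e l * y l else 0) ^ d) = 0"
    using diagonal_zero_of_offset_zero[of I s d A \<pi> r U k c y] pair others decomp(1) \<open>6 \<le> d\<close>
    by (auto simp: I_def)
  moreover have "(if j \<in> I then \<pi> ^ e j * y j else 0) \<noteq> (0::'a oint)"
    using pair(3) pi_power_neq_zero by (simp add: I_def y_def)
  ultimately show ?thesis
    by (intro exI[of _ "\<lambda>l. if l \<in> I then \<pi> ^ e l * y l else 0"]) simp
qed

lemma Rep_oint_power: "Rep_oint (x ^ k :: 'a::ramified_disc oint) = ok_pow (disc TYPE('a)) (Rep_oint x) k"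
proof (induction k)
  case (Suc k)
  have "x ^ Suc k = x ^ k * x" by (rule power_Suc2)
  then show ?case by (simp only: Rep_oint_ops ok_pow.simps Suc.IH)
qed (simp add: Rep_oint_ops)

lemma Rep_oint_sum: "ok_sum (\<lambda>i. Rep_oint (f i :: 'a::ramified_disc oint)) s = Rep_oint (\<Sum>i<s. f i)"
  by (induction s) (simp_all add: Rep_oint_ops)

lemma ok_unit_iff: "ok_unit (disc TYPE('a::ramified_disc)) u \<longleftrightarrow> u \<in> O_set \<and> (Abs_oint u :: 'a oint) dvd 1"
proof -
  have "ok_mul (disc TYPE('a)) u v = ok_one \<longleftrightarrow> (Abs_oint u :: 'a oint) * Abs_oint v = 1"
    if "u \<in> O_set" "v \<in> O_set" for v
    using that by (simp add: Rep_oint_inject[symmetric] Rep_oint_ops Abs_oint_inverse)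
  then show ?thesis
    unfolding ok_unit_def dvd_def
    by (metis Abs_oint_cases Abs_oint_inverse Rep_oint eq_commute)
qed

lemma Abs_oint_eq_pi_power_mult_unitpart:
  assumes a: "a \<in> O_set" "a \<noteq> ok_zero"
  defines "D \<equiv> disc TYPE('a::ramified_disc)"
  shows "(Abs_oint a :: 'a oint) = \<pi> ^ ok_ord D a * Abs_oint (ok_unitpart D a)"
    and "(Abs_oint (ok_unitpart D a) :: 'a oint) dvd 1"
    and "ok_unitpart D a \<in> O_set"
proof -
  have "(Abs_oint a :: 'a oint) \<noteq> 0"
    using a by (metis Abs_oint_inverse Rep_oint_ops(1))
  then obtain r and u :: "'a oint" where ru: "Abs_oint a = \<pi> ^ r * u" "u dvd 1"
    by (rule pi_power_mult_unit)
  have "a = Rep_oint (Abs_oint a :: 'a oint)" using a by (simp add: Abs_oint_inverse)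
  also have "\<dots> = ok_mul D (ok_pow D ok_pi r) (Rep_oint u)"
    by (simp add: ru(1) D_def Rep_oint_ops Rep_oint_power Rep_oint_pi)
  finally have "ok_unit D (Rep_oint u) \<and> a = ok_mul D (ok_pow D ok_pi r) (Rep_oint u)"
    using ru(2) by (simp add: D_def ok_unit_iff Rep_oint Rep_oint_inverse)
  then have "\<exists>r u. ok_unit D u \<and> a = ok_mul D (ok_pow D ok_pi r) u" by blast
  then have "\<exists>u. ok_unit D u \<and> a = ok_mul D (ok_pow D ok_pi (ok_ord D a)) u"
    unfolding ok_ord_def by (rule LeastI_ex)
  then have unitpart: "ok_unit D (ok_unitpart D a) \<and>
      a = ok_mul D (ok_pow D ok_pi (ok_ord D a)) (ok_unitpart D a)"
    unfolding ok_unitpart_def by (rule someI_ex)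
  then show "ok_unitpart D a \<in> O_set" "(Abs_oint (ok_unitpart D a) :: 'a oint) dvd 1"
    by (simp_all add: D_def ok_unit_iff)
  then show "(Abs_oint a :: 'a oint) = \<pi> ^ ok_ord D a * Abs_oint (ok_unitpart D a)"
    using unitpart
    by (simp add: Rep_oint_inject[symmetric] Rep_oint_ops Rep_oint_power Rep_oint_pi Abs_oint_inverse a D_def)
qed

lemma Rep_oint_pi_expansion:
  "Rep_oint (1 + of_nat c * \<pi> + \<pi> ^ 2 * W :: 'a::ramified_disc oint)
    = ok_add (ok_add ok_one (ok_mul (disc TYPE('a)) (z2_of_int (int c), z2_of_int 0) ok_pi))
        (ok_mul (disc TYPE('a)) (ok_pow (disc TYPE('a)) ok_pi 2) (Rep_oint W))"
  by (simp add: Rep_oint_ops Rep_oint_of_nat Rep_oint_power Rep_oint_pi)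

lemma pi_coeff_eq_The_pi_digit:
  "pi_coeff (disc TYPE('a)) (Rep_oint U) = (THE c. pi_digit (U::'a::ramified_disc oint) c)"
proof -
  let ?D = "disc TYPE('a)"
  have "(\<exists>w\<in>O_set. Rep_oint U
      = ok_add (ok_add ok_one (ok_mul ?D (z2_of_int (int c), z2_of_int 0) ok_pi)) (ok_mul ?D (ok_pow ?D ok_pi 2) w))
    \<longleftrightarrow> (\<exists>W. U = 1 + of_nat c * \<pi> + \<pi> ^ 2 * W)" for c
  proof
    assume "\<exists>w\<in>O_set. Rep_oint U = ok_add (ok_add ok_one (ok_mul ?D (z2_of_int (int c), z2_of_int 0) ok_pi))
      (ok_mul ?D (ok_pow ?D ok_pi 2) w)"
    then obtain w where w: "w \<in> O_set" "Rep_oint U = ok_add (ok_add ok_one (ok_mul ?D (z2_of_int (int c), z2_of_int 0) ok_pi))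
      (ok_mul ?D (ok_pow ?D ok_pi 2) w)" by blast
    then have "Rep_oint U = Rep_oint (1 + of_nat c * \<pi> + \<pi> ^ 2 * Abs_oint w :: 'a oint)"
      by (simp add: Rep_oint_pi_expansion Abs_oint_inverse)
    then have "U = 1 + of_nat c * \<pi> + \<pi> ^ 2 * Abs_oint w" by (simp only: Rep_oint_inject)
    then show "\<exists>W. U = 1 + of_nat c * \<pi> + \<pi> ^ 2 * W" by blast
  next
    assume "\<exists>W. U = 1 + of_nat c * \<pi> + \<pi> ^ 2 * W"
    then obtain W where "U = 1 + of_nat c * \<pi> + \<pi> ^ 2 * W" by blast
    then have "Rep_oint U = ok_add (ok_add ok_one (ok_mul ?D (z2_of_int (int c), z2_of_int 0) ok_pi))
      (ok_mul ?D (ok_pow ?D ok_pi 2) (Rep_oint W))" by (simp only: Rep_oint_pi_expansion)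
    then show "\<exists>w\<in>O_set. Rep_oint U = ok_add (ok_add ok_one (ok_mul ?D (z2_of_int (int c), z2_of_int 0) ok_pi))
      (ok_mul ?D (ok_pow ?D ok_pi 2) w)" using Rep_oint by blast
  qed
  then show ?thesis unfolding pi_coeff_def pi_digit_def by simp
qed

lemma pi_digit_pi_coeff:
  assumes "(U::'a::ramified_disc oint) dvd 1"
  shows "pi_digit U (pi_coeff (disc TYPE('a)) (Rep_oint U))"
proof -
  have "\<exists>!c. pi_digit U c" using pi_digit_exists[OF assms] pi_digit_unique by blast
  then show ?thesis unfolding pi_coeff_eq_The_pi_digit by (rule theI')
qed

lemma pi_sq_dvd_add_of_same_pi_coeff:
  fixes U V :: "'a::ramified_disc oint"
  assumes "U dvd 1" "V dvd 1" "pi_coeff (disc TYPE('a)) (Rep_oint U) = pi_coeff (disc TYPE('a)) (Rep_oint V)"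
  shows "\<pi> ^ 2 dvd U + V"
proof -
  define c where "c = pi_coeff (disc TYPE('a)) (Rep_oint U)"
  obtain W where U: "U = 1 + of_nat c * \<pi> + \<pi> ^ 2 * W"
    using pi_digit_pi_coeff[OF assms(1)] by (auto simp: c_def pi_digit_def)
  obtain W' where V: "V = 1 + of_nat c * \<pi> + \<pi> ^ 2 * W'"
    using pi_digit_pi_coeff[OF assms(2)] by (auto simp: c_def assms(3) pi_digit_def)
  obtain w :: "'a oint" where two: "2 = \<pi> ^ 2 * w" using two_eq_pi_sq_mult_unit by blast
  have "U + V = 2 * (1 + of_nat c * \<pi>) + \<pi> ^ 2 * (W + W')"
    unfolding U V by (simp add: algebra_simps)
  also have "\<dots> = \<pi> ^ 2 * (w * (1 + of_nat c * \<pi>) + W + W')"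
    unfolding two by (simp add: algebra_simps)
  finally show ?thesis by simp
qed

lemma ok_sum_cong: "(\<And>i. i < s \<Longrightarrow> g i = g' i) \<Longrightarrow> ok_sum g s = ok_sum g' s"
  by (induction s) auto

lemma ok_form_zero_of_oint_zero:
  assumes "\<forall>i<s. a i \<in> O_set" "(\<Sum>i<s. Abs_oint (a i) * X i ^ d) = (0::'a::ramified_disc oint)"
  shows "ok_sum (\<lambda>i. ok_mul (disc TYPE('a)) (a i) (ok_pow (disc TYPE('a)) (Rep_oint (X i)) d)) s = ok_zero"
proof -
  have "ok_sum (\<lambda>i. ok_mul (disc TYPE('a)) (a i) (ok_pow (disc TYPE('a)) (Rep_oint (X i)) d)) s
      = ok_sum (\<lambda>i. Rep_oint (Abs_oint (a i) * X i ^ d)) s"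
    using assms(1) by (intro ok_sum_cong) (simp add: Abs_oint_inverse Rep_oint_ops Rep_oint_power)
  also have "\<dots> = ok_zero"
    by (simp only: Rep_oint_sum assms(2) Rep_oint_ops(1))
  finally show ?thesis .
qed

lemma lemma15_for_type:
  fixes D :: int and m d s k :: nat and a :: "nat \<Rightarrow> ok"
  assumes D: "D = disc TYPE('a::ramified_disc)"
    and m: "odd m" "m \<ge> 3" and dm: "d = 2 * m"
    and coeffs: "\<forall>i<s. a i \<in> O_set \<and> a i \<noteq> ok_zero"
    and two: "\<exists>i<s. \<exists>j<s. i \<noteq> j \<and> level D d (a i) = k \<and> level D d (a j) = k
                 \<and> var_pi_coeff D (a i) = var_pi_coeff D (a j)"
    and lv: "((\<exists>i<s. level D d (a i) = (k + 2) mod d) \<and> (\<exists>j<s. level D d (a j) = (k + 3) mod d))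
           \<or> ((\<exists>i<s. level D d (a i) = (k + 3) mod d) \<and> (\<exists>j<s. level D d (a j) = (k + 4) mod d))"
  shows "\<exists>x :: nat \<Rightarrow> ok. (\<forall>i<s. x i \<in> O_set) \<and> (\<exists>i<s. x i \<noteq> ok_zero)
           \<and> ok_sum (\<lambda>i. ok_mul D (a i) (ok_pow D (x i) d)) s = ok_zero"
proof -
  define A U :: "nat \<Rightarrow> 'a oint" where "A i = Abs_oint (a i)" and "U i = Abs_oint (ok_unitpart D (a i))" for i
  define r where "r i = ok_ord D (a i)" for i
  have decomp: "A i = \<pi> ^ r i * U i" "U i dvd 1" "ok_unitpart D (a i) = Rep_oint (U i)" if "i < s" for i
    using Abs_oint_eq_pi_power_mult_unitpart[of "a i", where 'a='a] coeffs that
    by (auto simp: A_def U_def r_def D Abs_oint_inverse)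
  obtain i j where ij: "i < s" "j < s" "i \<noteq> j" "r i mod d = k" "r j mod d = k"
    and "var_pi_coeff D (a i) = var_pi_coeff D (a j)"
    using two by (auto simp: level_def r_def)
  then have "\<pi> ^ 2 dvd U i + U j"
    using decomp by (intro pi_sq_dvd_add_of_same_pi_coeff) (simp_all add: var_pi_coeff_def D)
  moreover obtain p q c c' where "p < s" "q < s" "(c, c') \<in> {(2, 3), (3, 4)}"
    "r p mod d = (k + c) mod d" "r q mod d = (k + c') mod d"
  proof -
    have level: "level D d (a l) = r l mod d" for l by (simp add: level_def r_def)
    from lv consider
      "\<exists>p<s. \<exists>q<s. r p mod d = (k + 2) mod d \<and> r q mod d = (k + 3) mod d"
      | "\<exists>p<s. \<exists>q<s. r p mod d = (k + 3) mod d \<and> r q mod d = (k + 4) mod d"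
      unfolding level by blast
    then show thesis
      by cases (use that[of _ _ 2 3] that[of _ _ 3 4] in auto)
  qed
  ultimately obtain X where X: "X j \<noteq> 0" "(\<Sum>l<s. A l * X l ^ d) = 0"
    using diagonal_form_has_zero[OF m dm, of s A r U i j k p q c c'] decomp ij by blast
  have "ok_sum (\<lambda>l. ok_mul D (a l) (ok_pow D (Rep_oint (X l)) d)) s = ok_zero"
    using ok_form_zero_of_oint_zero[of s a X d] coeffs X(2) by (simp add: A_def D)
  moreover have "Rep_oint (X j) \<noteq> ok_zero"
    using X(1) Rep_oint_inject[of "X j" 0] by (simp add: Rep_oint_ops(1))
  ultimately show ?thesis
    using ij(2) Rep_oint by (intro exI[of _ "\<lambda>l. Rep_oint (X l)"]) auto
qed

datatype Q2_sqrt_2 = Q2_sqrt_2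
datatype Q2_sqrt_neg2 = Q2_sqrt_neg2
datatype Q2_sqrt_10 = Q2_sqrt_10
datatype Q2_sqrt_neg10 = Q2_sqrt_neg10
datatype Q2_sqrt_neg1 = Q2_sqrt_neg1
datatype Q2_sqrt_neg5 = Q2_sqrt_neg5

instantiation Q2_sqrt_2 :: ramified_disc
begin
definition disc_Q2_sqrt_2: "disc (_ :: Q2_sqrt_2 itself) = (2 :: int)"
instance by standard (simp add: disc_Q2_sqrt_2)
end

instantiation Q2_sqrt_neg2 :: ramified_disc
begin
definition disc_Q2_sqrt_neg2: "disc (_ :: Q2_sqrt_neg2 itself) = (-2 :: int)"
instance by standard (simp add: disc_Q2_sqrt_neg2)
end

instantiation Q2_sqrt_10 :: ramified_disc
begin
definition disc_Q2_sqrt_10: "disc (_ :: Q2_sqrt_10 itself) = (10 :: int)"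
instance by standard (simp add: disc_Q2_sqrt_10)
end

instantiation Q2_sqrt_neg10 :: ramified_disc
begin
definition disc_Q2_sqrt_neg10: "disc (_ :: Q2_sqrt_neg10 itself) = (-10 :: int)"
instance by standard (simp add: disc_Q2_sqrt_neg10)
end

instantiation Q2_sqrt_neg1 :: ramified_disc
begin
definition disc_Q2_sqrt_neg1: "disc (_ :: Q2_sqrt_neg1 itself) = (-1 :: int)"
instance by standard (simp add: disc_Q2_sqrt_neg1)
end

instantiation Q2_sqrt_neg5 :: ramified_disc
begin
definition disc_Q2_sqrt_neg5: "disc (_ :: Q2_sqrt_neg5 itself) = (-5 :: int)"
instance by standard (simp add: disc_Q2_sqrt_neg5)
end

theorem lemma15:
  fixes D :: int and m d s k :: nat and a :: "nat \<Rightarrow> ok"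
  assumes K: "D \<in> {2, -2, 10, -10, -1, -5}"
    and m: "odd m" "m \<ge> 3" and dm: "d = 2 * m"
    and coeffs: "\<forall>i<s. a i \<in> O_set \<and> a i \<noteq> ok_zero"
    and k: "k < d"
    and two: "\<exists>i<s. \<exists>j<s. i \<noteq> j \<and> level D d (a i) = k \<and> level D d (a j) = k
                 \<and> var_pi_coeff D (a i) = var_pi_coeff D (a j)"
    and lv: "((\<exists>i<s. level D d (a i) = (k + 2) mod d) \<and> (\<exists>j<s. level D d (a j) = (k + 3) mod d))
           \<or> ((\<exists>i<s. level D d (a i) = (k + 3) mod d) \<and> (\<exists>j<s. level D d (a j) = (k + 4) mod d))"
  shows "\<exists>x :: nat \<Rightarrow> ok. (\<forall>i<s. x i \<in> O_set) \<and> (\<exists>i<s. x i \<noteq> ok_zero)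
           \<and> ok_sum (\<lambda>i. ok_mul D (a i) (ok_pow D (x i) d)) s = ok_zero"
proof -
  from K consider "D = disc TYPE(Q2_sqrt_2)" | "D = disc TYPE(Q2_sqrt_neg2)" | "D = disc TYPE(Q2_sqrt_10)"
    | "D = disc TYPE(Q2_sqrt_neg10)" | "D = disc TYPE(Q2_sqrt_neg1)" | "D = disc TYPE(Q2_sqrt_neg5)"
    by (auto simp: disc_Q2_sqrt_2 disc_Q2_sqrt_neg2 disc_Q2_sqrt_10 disc_Q2_sqrt_neg10
        disc_Q2_sqrt_neg1 disc_Q2_sqrt_neg5)
  then show ?thesis
    by cases (rule lemma15_for_type[OF _ m dm coeffs two lv], assumption)+
qed

end
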